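(* Let $1\le p\le\infty$. For all seed functions $f,f'\in\mathcal{L}^p(I)$ and every base function $b\in\mathcal{L}^p(I)$, $$\|(f*_Tb)-(f'*_Tb)\|_p\le\frac{1}{1-\Lambda}\|f-f'\|_p,$$ and for all base functions $b,b'\in\mathcal{L}^p(I)$ and every seed function $f\in\mathcal{L}^p(I)$, $$\|(f*_Tb)-(f*_Tb')\|_p\le\frac{\Lambda}{1-\Lambda}\|b-b'\|_p.$$ For $0<p<1$ the same inequalities hold with $\|g-h\|_p$ replaced by $d_p(g,h)=\int_I|g-h|^p\,dx$ and $\Lambda$ replaced by $\Lambda^p$.
   Context: Let $N\ge 2$, $I=[x_0,x_N]\subset\mathbb{R}$ and $\Delta: x_0<x_1<\dots<x_N$ a partition of $I$. For $n=1,\dots,N$ let $L_n(x)=a_nx+b_n$ be the affine map with $L_n(x_0)=x_{n-1}$, $L_n(x_N)=x_n$; set $I_1=[x_0,x_1]$, $I_n=(x_{n-1},x_n]$ for $n\ge 2$. Let $\alpha=(\alpha_1,\dots,\alpha_N)\in(\mathcal{L}^\infty(I))^N$ with $\Lambda:=\operatorname{ess\,sup}\{|\alpha_n(x)|:x\in I,\ n=1,\dots,N\}<1$. For $0<p\le\infty$ and $f,b\in\mathcal{L}^p(I)$, the fractal convolution $f*_Tb$ is the unique fixed point in $\mathcal{L}^p(I)$ of the contraction $Tg(x):=f(x)+\alpha_n(L_n^{-1}(x))\,(g-b)(L_n^{-1}(x))$, $x\in I_n$, $n=1,\dots,N$; i.e. $(f*_Tb)(x)=f(x)+\alpha_n(L_n^{-1}(x))((f*_Tb)-b)(L_n^{-1}(x))$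 on $I_n$. The partition, the maps $L_n$ and $\alpha$ are fixed. *)

theory Defs
  imports "HOL-Analysis.Analysis"
begin

definition Imeas :: "(nat \<Rightarrow> real) \<Rightarrow> nat \<Rightarrow> real measure" where
  "Imeas x N = lebesgue_on {x 0 .. x N}"

definition Ipiece :: "(nat \<Rightarrow> real) \<Rightarrow> nat \<Rightarrow> real set" where
  "Ipiece x n = (if n = 1 then {x 0 .. x 1} else {x (n - 1) <.. x n})"

text \<open>L_n(t) = a_n t + b_n with L_n(x_0) = x_(n-1), L_n(x_N) = x_n.\<close>
definition Lmap :: "(nat \<Rightarrow> real) \<Rightarrow> nat \<Rightarrow> nat \<Rightarrow> real \<Rightarrow> real" where
  "Lmap x N n t = x (n - 1) + (x n - x (n - 1)) / (x N - x 0) * (t - x 0)"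

definition Linv :: "(nat \<Rightarrow> real) \<Rightarrow> nat \<Rightarrow> nat \<Rightarrow> real \<Rightarrow> real" where
  "Linv x N n y = x 0 + (x N - x 0) / (x n - x (n - 1)) * (y - x (n - 1))"

text \<open>Membership in L^p(I), 0 < p <= infinity (as functions, not classes).\<close>
definition Lp_mem :: "real measure \<Rightarrow> ennreal \<Rightarrow> (real \<Rightarrow> real) \<Rightarrow> bool" where
  "Lp_mem M p g \<longleftrightarrow> g \<in> borel_measurable M \<and>
     (if p = (top::ennreal) then (\<exists>C. AE t in M. \<bar>g t\<bar> \<le> C)
      else integrable M (\<lambda>t. \<bar>g t\<bar> powr enn2real p))"

definition Lp_norm :: "real measure \<Rightarrow> ennreal \<Rightarrow> (real \<Rightarrow> real) \<Rightarrow> real" where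
  "Lp_norm M p g =
     (if p = (top::ennreal) then Inf {C. AE t in M. \<bar>g t\<bar> \<le> C}
      else (\<integral>t. \<bar>g t\<bar> powr enn2real p \<partial>M) powr (1 / enn2real p))"

definition d_p :: "real measure \<Rightarrow> real \<Rightarrow> (real \<Rightarrow> real) \<Rightarrow> (real \<Rightarrow> real) \<Rightarrow> real" where
  "d_p M p g h = (\<integral>t. \<bar>g t - h t\<bar> powr p \<partial>M)"

definition Lam :: "(nat \<Rightarrow> real) \<Rightarrow> nat \<Rightarrow> (nat \<Rightarrow> real \<Rightarrow> real) \<Rightarrow> real" where
  "Lam x N \<alpha> = Inf {C. AE t in Imeas x N. \<forall>n\<in>{1..N}. \<bar>\<alpha> n t\<bar> \<le> C}"

definition Top :: "(nat \<Rightarrow> real) \<Rightarrow> nat \<Rightarrow> (nat \<Rightarrow> real \<Rightarrow> real) \<Rightarrow>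
    (real \<Rightarrow> real) \<Rightarrow> (real \<Rightarrow> real) \<Rightarrow> (real \<Rightarrow> real) \<Rightarrow> real \<Rightarrow> real" where
  "Top x N \<alpha> f b g y = f y + (\<Sum>n\<in>{1..N}. if y \<in> Ipiece x n
       then \<alpha> n (Linv x N n y) * (g (Linv x N n y) - b (Linv x N n y)) else 0)"

text \<open>The fractal convolution f *_T b: the (a.e. unique) fixed point of T in L^p(I).\<close>
definition fconv :: "(nat \<Rightarrow> real) \<Rightarrow> nat \<Rightarrow> (nat \<Rightarrow> real \<Rightarrow> real) \<Rightarrow> ennreal \<Rightarrow>
    (real \<Rightarrow> real) \<Rightarrow> (real \<Rightarrow> real) \<Rightarrow> real \<Rightarrow> real" where
  "fconv x N \<alpha> p f b = (SOME g. Lp_mem (Imeas x N) p g \<and>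
       (AE y in Imeas x N. Top x N \<alpha> f b g y = g y))"

end

theory Submission
  imports Defs
begin

text \<open>
  Write \<open>T g = f + Tlin (g - b)\<close>, where \<open>Tlin u = (\<alpha>\<^sub>n u) \<circ> L\<^sub>n\<^sup>-\<^sup>1\<close> on \<open>I\<^sub>n\<close> is linear.
  Substituting \<open>t = L\<^sub>n\<^sup>-\<^sup>1 y\<close> turns an integral over \<open>I\<^sub>n\<close> into \<open>a\<^sub>n\<close> times an integral over \<open>I\<close>,
  and \<open>\<Sum>\<^sub>n a\<^sub>n = 1\<close>; hence \<open>\<integral>\<bar>Tlin u\<bar>\<^sup>p \<le> \<Lambda>\<^sup>p \<integral>\<bar>u\<bar>\<^sup>p\<close> for every \<open>p > 0\<close>, and
  \<open>\<parallel>Tlin u\<parallel>\<^sub>\<infinity> \<le> \<Lambda> \<parallel>u\<parallel>\<^sub>\<infinity>\<close>. So the Neumann series \<open>\<Sum>\<^sub>k Tlin\<^sup>k (f - Tlin b)\<close> converges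
  a.e. to a fixed point of \<open>T\<close> in \<open>L\<^sup>p\<close>, and the choice \<open>f *\<^sub>T b\<close> is a genuine fixed point.
  Fixed points \<open>g = h + Tlin g\<close> and \<open>g' = h' + Tlin g'\<close> satisfy
  \<open>\<nu>(g - g') \<le> \<nu>(h - h') + c \<nu>(g - g')\<close> for every subadditive \<open>\<nu>\<close> with \<open>\<nu>(Tlin u) \<le> c \<nu>(u)\<close>:
  take \<open>\<nu> = \<parallel>\<cdot>\<parallel>\<^sub>p\<close>, \<open>c = \<Lambda>\<close> if \<open>p \<ge> 1\<close>, and \<open>\<nu> = \<integral>\<bar>\<cdot>\<bar>\<^sup>p\<close>, \<open>c = \<Lambda>\<^sup>p\<close> if \<open>p \<le> 1\<close>.
  With \<open>h = f - Tlin b\<close>, the difference \<open>h - h'\<close> is \<open>f - f'\<close> or \<open>Tlin (b' - b)\<close>.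
\<close>

section \<open>Elementary inequalities\<close>

lemma convex_combination_powr_le:
  fixes a b t q :: real
  assumes "0 \<le> a" "0 \<le> b" "0 < t" "t < 1" "1 \<le> q"
  shows "((1 - t) * a + t * b) powr q \<le> (1 - t) * a powr q + t * b powr q"
proof (cases "a = 0 \<or> b = 0")
  case False
  then have "a \<in> {0<..}" "b \<in> {0<..}" using assms by auto
  from convex_onD[OF powr_convex[OF \<open>1 \<le> q\<close>] _ _ this, of t] assms show ?thesis by simp
next
  case True
  have "s powr q \<le> s" if "0 < s" "s < 1" for s
    using that assms by (intro powr_le_one_le) auto
  then have "t powr q \<le> t" "(1 - t) powr q \<le> 1 - t" using assms by auto
  with True assms show ?thesis
    by (auto simp: powr_mult intro!: mult_right_mono)
qed

lemma abs_add_powr_le_weighted: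
  fixes a b t q :: real
  assumes t: "0 < t" "t < 1" and q: "1 \<le> q"
  shows "\<bar>a + b\<bar> powr q \<le> (1 - t) powr (1 - q) * \<bar>a\<bar> powr q + t powr (1 - q) * \<bar>b\<bar> powr q"
proof -
  have "\<bar>a + b\<bar> powr q \<le> (\<bar>a\<bar> + \<bar>b\<bar>) powr q" using q by (intro powr_mono2) auto
  also have "\<bar>a\<bar> + \<bar>b\<bar> = (1 - t) * (\<bar>a\<bar> / (1 - t)) + t * (\<bar>b\<bar> / t)" using t by simp
  also have "\<dots> powr q \<le> (1 - t) * (\<bar>a\<bar> / (1 - t)) powr q + t * (\<bar>b\<bar> / t) powr q"
    using t q by (intro convex_combination_powr_le) auto
  also have "\<dots> = (1 - t) powr (1 - q) * \<bar>a\<bar> powr q + t powr (1 - q) * \<bar>b\<bar> powr q"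
    using t by (simp add: powr_divide powr_diff field_simps)
  finally show ?thesis .
qed

lemma abs_add_powr_le_add_powr:
  fixes a b q :: real
  assumes q: "0 < q" "q \<le> 1"
  shows "\<bar>a + b\<bar> powr q \<le> \<bar>a\<bar> powr q + \<bar>b\<bar> powr q"
proof (cases "a = 0 \<or> b = 0")
  case False
  define s where "s = \<bar>a\<bar> + \<bar>b\<bar>"
  have s: "\<bar>a\<bar> < s" "\<bar>b\<bar> < s" using False by (auto simp: s_def)
  have le: "c * s powr (q - 1) \<le> c powr q" if "0 < c" "c < s" for c
  proof -
    have "s powr (q - 1) \<le> c powr (q - 1)" using that q by (intro powr_mono2') auto
    then have "c * s powr (q - 1) \<le> c * c powr (q - 1)" using that by simp
    also have "\<dots> = c powr q" using that by (simp add: powr_diff)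
    finally show ?thesis .
  qed
  have "\<bar>a + b\<bar> powr q \<le> s powr q" unfolding s_def using q by (intro powr_mono2) auto
  also have "\<dots> = s * s powr (q - 1)" using s by (simp add: powr_diff)
  also have "\<dots> = \<bar>a\<bar> * s powr (q - 1) + \<bar>b\<bar> * s powr (q - 1)"
    by (simp add: s_def distrib_right)
  also have "\<dots> \<le> \<bar>a\<bar> powr q + \<bar>b\<bar> powr q" using le s False by (intro add_mono) auto
  finally show ?thesis .
qed auto

lemma abs_add_powr_le_two_powr:
  fixes a b q :: real
  assumes "0 < q"
  shows "\<bar>a + b\<bar> powr q \<le> 2 powr q * (\<bar>a\<bar> powr q + \<bar>b\<bar> powr q)"
proof -
  have "\<bar>a + b\<bar> powr q \<le> (2 * max \<bar>a\<bar> \<bar>b\<bar>) powr q" using assms by (intro powr_mono2) auto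
  also have "\<dots> = 2 powr q * max \<bar>a\<bar> \<bar>b\<bar> powr q" by (simp add: powr_mult)
  also have "max \<bar>a\<bar> \<bar>b\<bar> powr q \<le> \<bar>a\<bar> powr q + \<bar>b\<bar> powr q" by (simp add: max_def)
  finally show ?thesis by simp
qed

lemma summable_of_abs_powr_le_geometric:
  fixes d :: "nat \<Rightarrow> real"
  assumes q: "0 < q" and \<rho>: "0 < \<rho>" "\<rho> < 1" and w: "0 \<le> w"
    and d: "\<And>k. \<bar>d k\<bar> powr q \<le> w * \<rho> ^ k"
  shows "summable d" and "\<bar>suminf d\<bar> powr q \<le> w / (1 - \<rho> powr (1 / q)) powr q"
proof -
  define \<sigma> where "\<sigma> = \<rho> powr (1 / q)"
  have \<sigma>: "0 < \<sigma>" "\<sigma> < 1"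
    using \<rho> q powr_less_mono2[of "1 / q" \<rho> 1] by (auto simp: \<sigma>_def)
  have d_le: "\<bar>d k\<bar> \<le> w powr (1 / q) * \<sigma> ^ k" for k
  proof -
    have "\<bar>d k\<bar> = (\<bar>d k\<bar> powr q) powr (1 / q)" using q by (simp add: powr_powr)
    also have "\<dots> \<le> (w * \<rho> ^ k) powr (1 / q)" using d q by (intro powr_mono2) auto
    also have "\<dots> = w powr (1 / q) * \<sigma> ^ k"
      using w \<rho> by (simp add: powr_mult \<sigma>_def powr_realpow[symmetric] powr_powr mult.commute)
    finally show ?thesis .
  qed
  have geometric: "summable (\<lambda>k. w powr (1 / q) * \<sigma> ^ k)"
    using \<sigma> by (intro summable_mult summable_geometric) auto
  show "summable d" by (rule summable_comparison_test'[OF geometric]) (use d_le in auto)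
  have "norm (suminf d) \<le> (\<Sum>k. w powr (1 / q) * \<sigma> ^ k)"
    by (rule norm_suminf_le[OF _ geometric]) (use d_le in simp)
  then have "\<bar>suminf d\<bar> \<le> (\<Sum>k. w powr (1 / q) * \<sigma> ^ k)" by simp
  also have "\<dots> = w powr (1 / q) / (1 - \<sigma>)"
    using \<sigma> by (simp add: suminf_mult suminf_geometric)
  finally have "\<bar>suminf d\<bar> powr q \<le> (w powr (1 / q) / (1 - \<sigma>)) powr q"
    using q by (intro powr_mono2) auto
  also have "\<dots> = w / (1 - \<sigma>) powr q"
    using q w \<sigma> by (simp add: powr_divide powr_powr)
  finally show "\<bar>suminf d\<bar> powr q \<le> w / (1 - \<rho> powr (1 / q)) powr q" by (simp add: \<sigma>_def)
qed

section \<open>Lebesgue spaces\<close>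

lemma Lp_mem_ennreal_iff:
  "0 \<le> q \<Longrightarrow> Lp_mem M (ennreal q) u \<longleftrightarrow>
    u \<in> borel_measurable M \<and> integrable M (\<lambda>t. \<bar>u t\<bar> powr q)"
  by (simp add: Lp_mem_def)

lemma Lp_norm_ennreal:
  "0 \<le> q \<Longrightarrow> Lp_norm M (ennreal q) u = (\<integral>t. \<bar>u t\<bar> powr q \<partial>M) powr (1 / q)"
  by (simp add: Lp_norm_def)

lemma positive_ennreal_cases:
  fixes p :: ennreal
  assumes "0 < p"
  obtains "p = top" | q where "p = ennreal q" "0 < q"
  using assms by (cases p rule: ennreal_cases) auto

lemma Lp_mem_uminus: "Lp_mem M p u \<Longrightarrow> Lp_mem M p (\<lambda>t. - u t)"
  by (simp add: Lp_mem_def)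

lemma Lp_mem_add:
  assumes "0 < p" and u: "Lp_mem M p u" and v: "Lp_mem M p v"
  shows "Lp_mem M p (\<lambda>t. u t + v t)"
  using \<open>0 < p\<close>
proof (cases rule: positive_ennreal_cases)
  case 1
  with u v obtain C D where "AE t in M. \<bar>u t\<bar> \<le> C" "AE t in M. \<bar>v t\<bar> \<le> D"
    by (auto simp: Lp_mem_def)
  then have "AE t in M. \<bar>u t + v t\<bar> \<le> C + D" by eventually_elim auto
  with 1 u v show ?thesis by (auto simp: Lp_mem_def)
next
  case (2 q)
  with u v have [measurable]: "u \<in> borel_measurable M" "v \<in> borel_measurable M"
    and bound: "integrable M (\<lambda>t. 2 powr q * (\<bar>u t\<bar> powr q + \<bar>v t\<bar> powr q))"
    by (auto simp: Lp_mem_ennreal_iff)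
  have "integrable M (\<lambda>t. \<bar>u t + v t\<bar> powr q)"
  proof (rule Bochner_Integration.integrable_bound[OF bound])
    show "AE t in M. norm (\<bar>u t + v t\<bar> powr q) \<le> norm (2 powr q * (\<bar>u t\<bar> powr q + \<bar>v t\<bar> powr q))"
      using abs_add_powr_le_two_powr[OF \<open>0 < q\<close>] by (intro AE_I2) auto
  qed measurable
  with 2 show ?thesis by (simp add: Lp_mem_ennreal_iff)
qed

lemma Lp_mem_diff: "0 < p \<Longrightarrow> Lp_mem M p u \<Longrightarrow> Lp_mem M p v \<Longrightarrow> Lp_mem M p (\<lambda>t. u t - v t)"
  using Lp_mem_add[of p M u "\<lambda>t. - v t"] Lp_mem_uminus[of M p v] by simp

lemma Lp_norm_uminus: "Lp_norm M p (\<lambda>t. - u t) = Lp_norm M p u"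
  by (simp add: Lp_norm_def)

lemma Lp_norm_cong_AE:
  assumes "Lp_mem M p u" "Lp_mem M p v" "AE t in M. u t = v t"
  shows "Lp_norm M p u = Lp_norm M p v"
proof (cases "p = top")
  case True
  have "(AE t in M. \<bar>u t\<bar> \<le> C) \<longleftrightarrow> (AE t in M. \<bar>v t\<bar> \<le> C)" for C
    using assms(3) by (auto elim: AE_mp)
  with True show ?thesis by (simp add: Lp_norm_def)
next
  case False
  with assms have "(\<integral>t. \<bar>u t\<bar> powr enn2real p \<partial>M) = (\<integral>t. \<bar>v t\<bar> powr enn2real p \<partial>M)"
    by (intro integral_cong_AE) (auto simp: Lp_mem_def elim!: eventually_mono)
  with False show ?thesis by (simp add: Lp_norm_def)
qed

lemma integral_abs_powr_add_le:
  assumes q: "0 < q" "q \<le> 1"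
    and u: "Lp_mem M (ennreal q) u" and v: "Lp_mem M (ennreal q) v"
  shows "(\<integral>t. \<bar>u t + v t\<bar> powr q \<partial>M) \<le> (\<integral>t. \<bar>u t\<bar> powr q \<partial>M) + (\<integral>t. \<bar>v t\<bar> powr q \<partial>M)"
proof -
  have "Lp_mem M (ennreal q) (\<lambda>t. u t + v t)" using q u v by (intro Lp_mem_add) auto
  with q u v have "(\<integral>t. \<bar>u t + v t\<bar> powr q \<partial>M) \<le> (\<integral>t. \<bar>u t\<bar> powr q + \<bar>v t\<bar> powr q \<partial>M)"
    by (intro integral_mono abs_add_powr_le_add_powr) (auto simp: Lp_mem_ennreal_iff)
  with q u v show ?thesis by (simp add: Lp_mem_ennreal_iff)
qed

lemma integral_abs_powr_add_le_weighted:
  assumes q: "1 \<le> q" and t: "0 < t" "t < 1"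
    and u: "Lp_mem M (ennreal q) u" and v: "Lp_mem M (ennreal q) v"
  shows "(\<integral>s. \<bar>u s + v s\<bar> powr q \<partial>M)
    \<le> (1 - t) powr (1 - q) * (\<integral>s. \<bar>u s\<bar> powr q \<partial>M) + t powr (1 - q) * (\<integral>s. \<bar>v s\<bar> powr q \<partial>M)"
proof -
  have "Lp_mem M (ennreal q) (\<lambda>s. u s + v s)" using q u v by (intro Lp_mem_add) auto
  with q u v have "(\<integral>s. \<bar>u s + v s\<bar> powr q \<partial>M)
      \<le> (\<integral>s. (1 - t) powr (1 - q) * \<bar>u s\<bar> powr q + t powr (1 - q) * \<bar>v s\<bar> powr q \<partial>M)"
    by (intro integral_mono abs_add_powr_le_weighted t) (auto simp: Lp_mem_ennreal_iff)
  with q u v show ?thesis by (simp add: Lp_mem_ennreal_iff)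
qed

lemma AE_zero_of_integral_abs_powr_eq_0:
  assumes "0 < q" "Lp_mem M (ennreal q) w" "(\<integral>t. \<bar>w t\<bar> powr q \<partial>M) = 0"
  shows "AE t in M. w t = 0"
proof -
  have "AE t in M. \<bar>w t\<bar> powr q = 0"
    using assms by (simp add: Lp_mem_ennreal_iff integral_nonneg_eq_0_iff_AE)
  then show ?thesis by eventually_elim simp
qed

lemma Minkowski_inequality:
  assumes q: "1 \<le> q" and u: "Lp_mem M (ennreal q) u" and v: "Lp_mem M (ennreal q) v"
  shows "Lp_norm M (ennreal q) (\<lambda>t. u t + v t) \<le> Lp_norm M (ennreal q) u + Lp_norm M (ennreal q) v"
proof -
  let ?E = "\<lambda>u. \<integral>t. \<bar>u t\<bar> powr q \<partial>M"
  define A B where "A = ?E u powr (1 / q)" and "B = ?E v powr (1 / q)"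
  have norms: "Lp_norm M (ennreal q) u = A" "Lp_norm M (ennreal q) v = B"
    "Lp_norm M (ennreal q) (\<lambda>t. u t + v t) = ?E (\<lambda>t. u t + v t) powr (1 / q)"
    using q by (simp_all add: Lp_norm_ennreal A_def B_def)
  have uv: "Lp_mem M (ennreal q) (\<lambda>t. u t + v t)" using q u v by (intro Lp_mem_add) auto
  consider "A = 0" | "B = 0" | "0 < A" "0 < B" using A_def B_def by fastforce
  then show ?thesis
  proof cases
    case 1
    then have "AE t in M. u t + v t = v t"
      using AE_zero_of_integral_abs_powr_eq_0[OF _ u] q by (auto simp: A_def elim!: eventually_mono)
    with 1 show ?thesis using Lp_norm_cong_AE[OF uv v] norms by simp
  next
    case 2
    then have "AE t in M. u t + v t = u t"
      using AE_zero_of_integral_abs_powr_eq_0[OF _ v] q by (auto simp: B_def elim!: eventually_mono)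
    with 2 show ?thesis using Lp_norm_cong_AE[OF uv u] norms by simp
  next
    case 3
    define t where "t = B / (A + B)"
    have t: "0 < t" "t < 1" "1 - t = A / (A + B)" using 3 by (auto simp: t_def field_simps)
    have weight: "(X / (A + B)) powr (1 - q) * X powr q = X * (A + B) powr (q - 1)" if "0 < X" for X
    proof -
      have "(X / (A + B)) powr (1 - q) * X powr q = X powr ((1 - q) + q) / (A + B) powr (1 - q)"
        using that 3 by (simp add: powr_divide powr_add[symmetric])
      also have "\<dots> = X * (A + B) powr (q - 1)" using that 3 by (simp add: powr_diff)
      finally show ?thesis .
    qed
    have "?E (\<lambda>t. u t + v t) \<le> (1 - t) powr (1 - q) * A powr q + t powr (1 - q) * B powr q"
      using integral_abs_powr_add_le_weighted[OF q t(1,2) u v] q by (simp add: A_def B_def powr_powr)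
    also have "\<dots> = (A + B) * (A + B) powr (q - 1)"
      unfolding t(3) using 3 by (simp add: weight t_def distrib_right)
    also have "\<dots> = (A + B) powr q" using 3 by (simp add: powr_diff)
    finally have "?E (\<lambda>t. u t + v t) powr (1 / q) \<le> ((A + B) powr q) powr (1 / q)"
      using q by (intro powr_mono2) auto
    also have "\<dots> = A + B" using 3 q by (simp add: powr_powr)
    finally show ?thesis using norms by simp
  qed
qed

lemma Inf_ess_bounds:
  fixes Q :: "'a \<Rightarrow> real"
  assumes nonneg: "\<And>t. 0 \<le> Q t" and nontrivial: "emeasure M (space M) \<noteq> 0"
    and bounded: "AE t in M. Q t \<le> C"
  shows "Inf {C. AE t in M. Q t \<le> C} \<le> C" and "0 \<le> Inf {C. AE t in M. Q t \<le> C}"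
    and "AE t in M. Q t \<le> Inf {C. AE t in M. Q t \<le> C}"
proof -
  define S where "S = {C. AE t in M. Q t \<le> C}"
  have "0 \<le> D" if "D \<in> S" for D
  proof (rule ccontr)
    assume "\<not> 0 \<le> D"
    with that nonneg have "AE t in M. False" by (auto simp: S_def elim!: eventually_mono) (meson le_less_trans not_le)
    with nontrivial show False by (simp add: eventually_False ae_filter_eq_bot_iff)
  qed
  moreover have "C \<in> S" using bounded by (simp add: S_def)
  ultimately have lower: "bdd_below S" and nonempty: "S \<noteq> {}" by (auto simp: bdd_below_def)
  show "Inf {C. AE t in M. Q t \<le> C} \<le> C" and "0 \<le> Inf {C. AE t in M. Q t \<le> C}"
    using \<open>C \<in> S\<close> \<open>\<And>D. D \<in> S \<Longrightarrow> 0 \<le> D\<close> lower unfolding S_def[symmetric]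
    by (auto intro: cInf_lower cInf_greatest)
  have "AE t in M. Q t \<le> Inf S + inverse (real (Suc k))" for k
  proof -
    obtain D where "D \<in> S" "D < Inf S + inverse (real (Suc k))"
      using cInf_lessD[OF nonempty, of "Inf S + inverse (real (Suc k))"] by auto
    then show ?thesis unfolding S_def by (auto elim!: eventually_mono)
  qed
  then have "AE t in M. \<forall>k. Q t \<le> Inf S + inverse (real (Suc k))" by (simp add: AE_all_countable)
  then show "AE t in M. Q t \<le> Inf {C. AE t in M. Q t \<le> C}"
    unfolding S_def[symmetric]
  proof (rule eventually_mono)
    fix t assume "\<forall>k. Q t \<le> Inf S + inverse (real (Suc k))"
    then show "Q t \<le> Inf S"
      by (metis reals_Archimedean add.commute diff_gt_0_iff_gt less_diff_eq not_le)
  qed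
qed

context
  fixes M :: "real measure"
  assumes nontrivial: "emeasure M (space M) \<noteq> 0"
begin

lemma Lp_norm_top_le: "AE t in M. \<bar>u t\<bar> \<le> C \<Longrightarrow> Lp_norm M top u \<le> C"
  using Inf_ess_bounds(1)[of "\<lambda>t. \<bar>u t\<bar>", OF _ nontrivial] by (simp add: Lp_norm_def)

lemma
  assumes "Lp_mem M top u"
  shows Lp_norm_top_nonneg: "0 \<le> Lp_norm M top u"
    and AE_le_Lp_norm_top: "AE t in M. \<bar>u t\<bar> \<le> Lp_norm M top u"
proof -
  from assms obtain C where "AE t in M. \<bar>u t\<bar> \<le> C" by (auto simp: Lp_mem_def)
  from Inf_ess_bounds(2,3)[of "\<lambda>t. \<bar>u t\<bar>", OF _ nontrivial this]
  show "0 \<le> Lp_norm M top u" "AE t in M. \<bar>u t\<bar> \<le> Lp_norm M top u"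
    by (simp_all add: Lp_norm_def)
qed

lemma Lp_norm_add_le:
  assumes "1 \<le> p" and u: "Lp_mem M p u" and v: "Lp_mem M p v"
  shows "Lp_norm M p (\<lambda>t. u t + v t) \<le> Lp_norm M p u + Lp_norm M p v"
proof (cases "p = top")
  case True
  with u v have "AE t in M. \<bar>u t\<bar> \<le> Lp_norm M p u" "AE t in M. \<bar>v t\<bar> \<le> Lp_norm M p v"
    by (simp_all add: AE_le_Lp_norm_top)
  then have "AE t in M. \<bar>u t + v t\<bar> \<le> Lp_norm M p u + Lp_norm M p v"
    by eventually_elim auto
  with True show ?thesis by (simp add: Lp_norm_top_le)
next
  case False
  with \<open>1 \<le> p\<close> obtain q where "p = ennreal q" "1 \<le> q"
    by (cases p rule: ennreal_cases) (auto simp flip: ennreal_1)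
  with u v show ?thesis by (simp add: Minkowski_inequality)
qed

end

text \<open>The weights \<open>\<rho>\<^sup>-\<^sup>k\<close> with \<open>r < \<rho>\<close> keep the weighted series integrable; wherever it is
  finite, its terms force \<open>\<bar>D\<^sub>k\<bar>\<^sup>q = O(\<rho>\<^sup>k)\<close>.\<close>
lemma nn_integral_weighted_series_less_top:
  fixes D :: "nat \<Rightarrow> 'a \<Rightarrow> real"
  assumes r: "0 \<le> r" "r < \<rho>"
    and D_measurable: "\<And>k. D k \<in> borel_measurable M"
    and D_integrable: "\<And>k. integrable M (\<lambda>y. \<bar>D k y\<bar> powr q)"
    and decay: "\<And>k. (\<integral>y. \<bar>D k y\<bar> powr q \<partial>M) \<le> r ^ k * C"
  shows "(\<integral>\<^sup>+ y. (\<Sum>k. ennreal (\<bar>D k y\<bar> powr q / \<rho> ^ k)) \<partial>M) < \<infinity>"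
proof -
  have \<rho>: "0 < \<rho>" "r / \<rho> < 1" using r by auto
  have [measurable]: "D k \<in> borel_measurable M" for k by (rule D_measurable)
  have "0 \<le> (\<integral>y. \<bar>D 0 y\<bar> powr q \<partial>M)" by (rule integral_nonneg_AE) simp
  then have C: "0 \<le> C" using decay[of 0] by (simp del: Bochner_Integration.integral_nonneg)
  have "(\<integral>\<^sup>+ y. (\<Sum>k. ennreal (\<bar>D k y\<bar> powr q / \<rho> ^ k)) \<partial>M)
      = (\<Sum>k. \<integral>\<^sup>+ y. ennreal (\<bar>D k y\<bar> powr q / \<rho> ^ k) \<partial>M)"
    by (rule nn_integral_suminf) measurable
  also have "\<dots> = (\<Sum>k. ennreal ((\<integral>y. \<bar>D k y\<bar> powr q \<partial>M) / \<rho> ^ k))"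
    using D_integrable \<rho> by (subst nn_integral_eq_integral) auto
  also have "\<dots> \<le> (\<Sum>k. ennreal ((r / \<rho>) ^ k * C))"
  proof (intro suminf_le summableI ennreal_leI)
    fix k
    have "(\<integral>y. \<bar>D k y\<bar> powr q \<partial>M) / \<rho> ^ k \<le> r ^ k * C / \<rho> ^ k"
      using decay[of k] \<rho> by (intro divide_right_mono) auto
    then show "(\<integral>y. \<bar>D k y\<bar> powr q \<partial>M) / \<rho> ^ k \<le> (r / \<rho>) ^ k * C"
      by (simp add: power_divide)
  qed
  also have "\<dots> = ennreal (\<Sum>k. (r / \<rho>) ^ k * C)"
    using r \<rho> C by (intro suminf_ennreal2 summable_mult2 summable_geometric) auto
  finally show ?thesis by (simp add: le_less_trans)
qed

lemma AE_summable_of_geometric_decay: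
  fixes D :: "nat \<Rightarrow> 'a \<Rightarrow> real"
  assumes q: "0 < q" and r: "0 \<le> r" "r < 1"
    and D_measurable: "\<And>k. D k \<in> borel_measurable M"
    and D_integrable: "\<And>k. integrable M (\<lambda>y. \<bar>D k y\<bar> powr q)"
    and decay: "\<And>k. (\<integral>y. \<bar>D k y\<bar> powr q \<partial>M) \<le> r ^ k * C"
  shows "AE y in M. summable (\<lambda>k. D k y)" and "integrable M (\<lambda>y. \<bar>\<Sum>k. D k y\<bar> powr q)"
proof -
  define \<rho> where "\<rho> = (1 + r) / 2"
  have \<rho>: "0 < \<rho>" "\<rho> < 1" "r < \<rho>" using r by (auto simp: \<rho>_def)
  define K where "K = 1 / (1 - \<rho> powr (1 / q)) powr q"
  define W where "W y = (\<Sum>k. ennreal (\<bar>D k y\<bar> powr q / \<rho> ^ k))" for y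
  have [measurable]: "D k \<in> borel_measurable M" for k by (rule D_measurable)
  have W_finite: "(\<integral>\<^sup>+ y. W y \<partial>M) < \<infinity>"
    unfolding W_def using r(1) \<rho>(3) D_measurable D_integrable decay
    by (rule nn_integral_weighted_series_less_top)
  have pointwise: "summable (\<lambda>k. D k y) \<and> ennreal (\<bar>\<Sum>k. D k y\<bar> powr q) \<le> K * W y"
    if "W y \<noteq> \<infinity>" for y
  proof -
    have summable_a: "summable (\<lambda>k. \<bar>D k y\<bar> powr q / \<rho> ^ k)"
      using that \<rho> by (intro summable_suminf_not_top) (auto simp: W_def)
    define w where "w = (\<Sum>k. \<bar>D k y\<bar> powr q / \<rho> ^ k)"
    have w: "0 \<le> w" "W y = ennreal w"
      using summable_a \<rho> by (auto simp: w_def W_def suminf_nonneg suminf_ennreal2)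
    have "\<bar>D k y\<bar> powr q / \<rho> ^ k \<le> w" for k
      using sum_le_suminf[OF summable_a, of "{k}"] \<rho> by (simp add: w_def)
    then have "\<bar>D k y\<bar> powr q \<le> w * \<rho> ^ k" for k using \<rho> by (simp add: pos_divide_le_eq)
    from summable_of_abs_powr_le_geometric[OF q \<rho>(1,2) w(1) this]
    show ?thesis using w by (simp add: K_def ennreal_mult'[symmetric] ennreal_leI)
  qed
  have AE_finite: "AE y in M. W y \<noteq> \<infinity>"
    using W_finite by (intro nn_integral_noteq_infinite) (auto simp: W_def)
  then show "AE y in M. summable (\<lambda>k. D k y)" using pointwise by (auto elim!: eventually_mono)
  show "integrable M (\<lambda>y. \<bar>\<Sum>k. D k y\<bar> powr q)"
  proof (rule integrableI_bounded)
    have "(\<integral>\<^sup>+ y. norm (\<bar>\<Sum>k. D k y\<bar> powr q) \<partial>M) \<le> (\<integral>\<^sup>+ y. K * W y \<partial>M)"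
      using AE_finite pointwise by (intro nn_integral_mono_AE) (auto elim!: eventually_mono)
    also have "\<dots> = K * (\<integral>\<^sup>+ y. W y \<partial>M)" by (rule nn_integral_cmult) (simp add: W_def)
    also have "\<dots> < \<infinity>" using W_finite by (simp add: ennreal_mult_less_top)
    finally show "(\<integral>\<^sup>+ y. norm (\<bar>\<Sum>k. D k y\<bar> powr q) \<partial>M) < \<infinity>" .
  qed measurable
qed

lemma AE_summable_of_AE_geometric_bound:
  fixes D :: "nat \<Rightarrow> 'a \<Rightarrow> real"
  assumes r: "0 \<le> r" "r < 1" and bound: "\<And>k. AE y in M. \<bar>D k y\<bar> \<le> C * r ^ k"
  shows "AE y in M. summable (\<lambda>k. D k y) \<and> \<bar>\<Sum>k. D k y\<bar> \<le> C / (1 - r)"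
proof -
  have geometric: "summable (\<lambda>k. C * r ^ k)" using r by (intro summable_mult summable_geometric) auto
  from bound have "AE y in M. \<forall>k. \<bar>D k y\<bar> \<le> C * r ^ k" by (simp add: AE_all_countable)
  then show ?thesis
  proof (rule eventually_mono, intro conjI)
    fix y assume y: "\<forall>k. \<bar>D k y\<bar> \<le> C * r ^ k"
    show "summable (\<lambda>k. D k y)" by (rule summable_comparison_test'[OF geometric]) (use y in simp)
    have "norm (\<Sum>k. D k y) \<le> (\<Sum>k. C * r ^ k)"
      by (rule norm_suminf_le[OF _ geometric]) (use y in simp)
    also have "\<dots> = C / (1 - r)" using r by (simp add: suminf_mult suminf_geometric)
    finally show "\<bar>\<Sum>k. D k y\<bar> \<le> C / (1 - r)" by simp
  qed
qed

section \<open>Fixed points of affine maps with a contractive linear part\<close>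

locale subadditive_contraction =
  fixes M :: "'a measure" and V :: "('a \<Rightarrow> real) set"
    and \<nu> :: "('a \<Rightarrow> real) \<Rightarrow> real" and S :: "('a \<Rightarrow> real) \<Rightarrow> 'a \<Rightarrow> real" and c :: real
  assumes add_mem: "u \<in> V \<Longrightarrow> v \<in> V \<Longrightarrow> (\<lambda>t. u t + v t) \<in> V"
    and uminus_mem: "u \<in> V \<Longrightarrow> (\<lambda>t. - u t) \<in> V"
    and S_mem: "u \<in> V \<Longrightarrow> S u \<in> V"
    and S_diff: "S (\<lambda>t. u t - v t) t = S u t - S v t"
    and subadditive: "u \<in> V \<Longrightarrow> v \<in> V \<Longrightarrow> \<nu> (\<lambda>t. u t + v t) \<le> \<nu> u + \<nu> v"
    and contraction: "u \<in> V \<Longrightarrow> \<nu> (S u) \<le> c * \<nu> u"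
    and uminus: "\<nu> (\<lambda>t. - u t) = \<nu> u"
    and cong_AE: "u \<in> V \<Longrightarrow> v \<in> V \<Longrightarrow> AE t in M. u t = v t \<Longrightarrow> \<nu> u = \<nu> v"
    and less_1: "c < 1"
begin

lemma diff_mem: "u \<in> V \<Longrightarrow> v \<in> V \<Longrightarrow> (\<lambda>t. u t - v t) \<in> V"
  using add_mem[OF _ uminus_mem, of u v] by simp

lemma fixed_point_dist_le:
  assumes "g \<in> V" "g' \<in> V" "h \<in> V" "h' \<in> V"
    and g: "AE t in M. g t = h t + S g t" and g': "AE t in M. g' t = h' t + S g' t"
  shows "\<nu> (\<lambda>t. g t - g' t) \<le> \<nu> (\<lambda>t. h t - h' t) / (1 - c)"
proof -
  let ?d = "\<lambda>t. g t - g' t"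
  have d: "?d \<in> V" "(\<lambda>t. h t - h' t) \<in> V" using assms by (simp_all add: diff_mem)
  from g g' have "AE t in M. ?d t = (h t - h' t) + S ?d t" by eventually_elim (simp add: S_diff)
  then have "\<nu> ?d = \<nu> (\<lambda>t. (h t - h' t) + S ?d t)" by (intro cong_AE add_mem d S_mem)
  also have "\<dots> \<le> \<nu> (\<lambda>t. h t - h' t) + c * \<nu> ?d"
    using subadditive[OF d(2) S_mem[OF d(1)]] contraction[OF d(1)] by simp
  finally show ?thesis using less_1 by (simp add: field_simps)
qed

text \<open>A fixed point of \<open>g \<mapsto> f + S (g - b)\<close> is a fixed point of \<open>g \<mapsto> (f - S b) + S g\<close>.\<close>
lemma seed_Lipschitz:
  assumes "f \<in> V" "f' \<in> V" "b \<in> V" "g \<in> V" "g' \<in> V"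
    and "AE t in M. g t = f t + S (\<lambda>s. g s - b s) t" and "AE t in M. g' t = f' t + S (\<lambda>s. g' s - b s) t"
  shows "\<nu> (\<lambda>t. g t - g' t) \<le> \<nu> (\<lambda>t. f t - f' t) / (1 - c)"
  using fixed_point_dist_le[of g g' "\<lambda>t. f t - S b t" "\<lambda>t. f' t - S b t"] assms
  by (simp add: diff_mem S_mem S_diff algebra_simps)

lemma base_Lipschitz:
  assumes "f \<in> V" "b \<in> V" "b' \<in> V" "g \<in> V" "g' \<in> V"
    and "AE t in M. g t = f t + S (\<lambda>s. g s - b s) t" and "AE t in M. g' t = f t + S (\<lambda>s. g' s - b' s) t"
  shows "\<nu> (\<lambda>t. g t - g' t) \<le> c * \<nu> (\<lambda>t. b t - b' t) / (1 - c)"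
proof -
  have "\<nu> (\<lambda>t. g t - g' t) \<le> \<nu> (\<lambda>t. (f t - S b t) - (f t - S b' t)) / (1 - c)"
    using assms by (intro fixed_point_dist_le) (simp_all add: diff_mem S_mem S_diff algebra_simps)
  also have "(\<lambda>t. (f t - S b t) - (f t - S b' t)) = S (\<lambda>t. b' t - b t)"
    by (simp add: fun_eq_iff S_diff)
  also have "\<nu> \<dots> \<le> c * \<nu> (\<lambda>t. b' t - b t)" using assms by (intro contraction diff_mem)
  also have "\<nu> (\<lambda>t. b' t - b t) = \<nu> (\<lambda>t. b t - b' t)" using uminus[of "\<lambda>t. b t - b' t"] by simp
  finally show ?thesis using less_1 by (simp add: divide_right_mono)
qed

end

section \<open>The fractal operator\<close>

locale interval_partition =
  fixes x :: "nat \<Rightarrow> real" and N :: nat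
  assumes N_pos: "0 < N" and x_increasing: "\<forall>i<N. x i < x (Suc i)"
begin

lemma x_less: "i < j \<Longrightarrow> j \<le> N \<Longrightarrow> x i < x j"
proof (induction j)
  case (Suc j)
  then have "x j < x (Suc j)" using x_increasing by simp
  with Suc show ?case by (cases "i < j") (auto simp: less_Suc_eq)
qed simp

lemma x_le: "i \<le> j \<Longrightarrow> j \<le> N \<Longrightarrow> x i \<le> x j"
  using x_less[of i j] by (cases "i = j") auto

lemma x_0_less_N: "x 0 < x N"
  using x_less N_pos by simp

lemma x_pred_less: "n \<in> {1..N} \<Longrightarrow> x (n - 1) < x n"
  by (intro x_less) auto

lemma Ipiece_subset: "n \<in> {1..N} \<Longrightarrow> Ipiece x n \<subseteq> {x (n - 1) .. x n}"
  by (auto simp: Ipiece_def)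

lemma Ipiece_subset_I: "n \<in> {1..N} \<Longrightarrow> {x (n - 1) .. x n} \<subseteq> {x 0 .. x N}"
  using x_le by auto

lemma Ipiece_disjoint:
  assumes "n \<in> {1..N}" "m \<in> {1..N}" "n \<noteq> m" "y \<in> Ipiece x n"
  shows "y \<notin> Ipiece x m"
proof -
  have "y \<notin> Ipiece x m" if nm: "n < m" "n \<in> {1..N}" "m \<in> {1..N}" and y: "y \<in> Ipiece x n" for n m
  proof -
    have "y \<le> x n" using y Ipiece_subset[OF nm(2)] by auto
    also have "x n \<le> x (m - 1)" using nm by (intro x_le) auto
    finally show ?thesis using nm by (auto simp: Ipiece_def)
  qed
  from this[of n m] this[of m n] assms show ?thesis by (cases "n < m") auto
qed

definition scale :: "nat \<Rightarrow> real" where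
  "scale n = (x n - x (n - 1)) / (x N - x 0)"

lemma scale_pos: "n \<in> {1..N} \<Longrightarrow> 0 < scale n"
  using x_0_less_N x_pred_less[of n] by (simp add: scale_def)

lemma sum_scale: "(\<Sum>n\<in>{1..N}. scale n) = 1"
  using x_0_less_N sum_telescope''[of 0 N x] N_pos
  by (simp add: scale_def flip: sum_divide_distrib)

lemma Linv_eq: "n \<in> {1..N} \<Longrightarrow> Linv x N n y = x 0 + (y - x (n - 1)) / scale n"
  using x_pred_less[of n] x_0_less_N by (simp add: Linv_def scale_def)

lemma Linv_affine:
  "n \<in> {1..N} \<Longrightarrow> Linv x N n y = (x 0 - x (n - 1) / scale n) + (1 / scale n) * y"
  by (simp add: Linv_eq diff_divide_distrib)

lemma Linv_mem_iff:
  assumes n: "n \<in> {1..N}"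
  shows "Linv x N n y \<in> {x 0 .. x N} \<longleftrightarrow> y \<in> {x (n - 1) .. x n}"
proof -
  have "x N = x 0 + (x n - x (n - 1)) / scale n"
    using x_0_less_N x_pred_less[OF n] by (simp add: scale_def)
  with scale_pos[OF n] show ?thesis
    by (simp add: Linv_eq[OF n] divide_le_cancel zero_le_divide_iff)
qed

lemma Linv_mem: "n \<in> {1..N} \<Longrightarrow> y \<in> Ipiece x n \<Longrightarrow> Linv x N n y \<in> {x 0 .. x N}"
  using Linv_mem_iff Ipiece_subset by blast

lemma Linv_measurable: "n \<in> {1..N} \<Longrightarrow> Linv x N n \<in> lebesgue \<rightarrow>\<^sub>M lebesgue"
proof -
  assume n: "n \<in> {1..N}"
  have "(\<lambda>y. (x 0 - x (n - 1) / scale n) + (\<Sum>j\<in>Basis. (1 / scale n * (y \<bullet> j)) *\<^sub>R j))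
      \<in> lebesgue \<rightarrow>\<^sub>M lebesgue"
    using scale_pos[OF n] by (intro lebesgue_affine_measurable) auto
  moreover have "Linv x N n = (\<lambda>y. (x 0 - x (n - 1) / scale n) + y / scale n)"
    by (simp add: Linv_affine[OF n] fun_eq_iff)
  ultimately show ?thesis by simp
qed

lemma emeasure_Imeas_nonzero: "emeasure (Imeas x N) (space (Imeas x N)) \<noteq> 0"
  using x_0_less_N by (simp add: Imeas_def emeasure_restrict_space)

lemma measurable_Ipiece_Linv:
  fixes \<phi> :: "real \<Rightarrow> 'b::topological_space"
  assumes \<phi>: "\<phi> \<in> borel_measurable (Imeas x N)" and n: "n \<in> {1..N}"
  shows "(\<lambda>y. if y \<in> Ipiece x n then \<phi> (Linv x N n y) else c) \<in> borel_measurable (Imeas x N)"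
proof -
  let ?\<phi> = "\<lambda>t. if t \<in> {x 0 .. x N} then \<phi> t else c"
  have "?\<phi> \<in> borel_measurable lebesgue"
    using \<phi> unfolding Imeas_def by (subst (asm) measurable_restrict_space_iff) auto
  then have "(\<lambda>y. ?\<phi> (Linv x N n y)) \<in> borel_measurable lebesgue"
    using Linv_measurable[OF n] by (rule measurable_compose[rotated])
  then have "(\<lambda>y. if y \<in> Ipiece x n then ?\<phi> (Linv x N n y) else c) \<in> borel_measurable lebesgue"
    by (intro measurable_If_set) (auto simp: Ipiece_def)
  also have "(\<lambda>y. if y \<in> Ipiece x n then ?\<phi> (Linv x N n y) else c)
      = (\<lambda>y. if y \<in> Ipiece x n then \<phi> (Linv x N n y) else c)"
    using Linv_mem[OF n] by (auto simp: fun_eq_iff)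
  finally show ?thesis unfolding Imeas_def by (rule measurable_restrict_space1)
qed

lemma measurable_indicator_Ipiece_Linv:
  fixes \<phi> :: "real \<Rightarrow> ennreal"
  assumes "\<phi> \<in> borel_measurable (Imeas x N)" "n \<in> {1..N}"
  shows "(\<lambda>y. indicator (Ipiece x n) y * \<phi> (Linv x N n y)) \<in> borel_measurable (Imeas x N)"
proof -
  have "(\<lambda>y. indicator (Ipiece x n) y * \<phi> (Linv x N n y)) = (\<lambda>y. if y \<in> Ipiece x n then \<phi> (Linv x N n y) else 0)"
    by (simp add: fun_eq_iff)
  with measurable_Ipiece_Linv[OF assms] show ?thesis by simp
qed

text \<open>\<open>I\<^sub>n\<close> and \<open>L\<^sub>n(I) = [x\<^sub>n\<^sub>-\<^sub>1, x\<^sub>n]\<close> differ at most in the null set \<open>{x\<^sub>n\<^sub>-\<^sub>1}\<close>.\<close>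
lemma nn_integral_Ipiece_Linv:
  fixes \<phi> :: "real \<Rightarrow> ennreal"
  assumes \<phi>: "\<phi> \<in> borel_measurable (Imeas x N)" and n: "n \<in> {1..N}"
  shows "(\<integral>\<^sup>+ y. indicator (Ipiece x n) y * \<phi> (Linv x N n y) \<partial>Imeas x N)
     = scale n * (\<integral>\<^sup>+ t. \<phi> t \<partial>Imeas x N)"
proof -
  define \<psi> where "\<psi> t = \<phi> t * indicator {x 0 .. x N} t" for t
  have \<psi>: "\<psi> \<in> borel_measurable lebesgue"
    using \<phi> unfolding \<psi>_def Imeas_def by (subst (asm) borel_measurable_restrict_space_iff_ennreal) auto
  have a: "0 < scale n" using scale_pos[OF n] .
  have "AE y in lebesgue. y \<noteq> x (n - 1)"
    using AE_lborel_singleton[of "x (n - 1)"] by (rule AE_completion)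
  then have "AE y in lebesgue. indicator (Ipiece x n) y * \<phi> (Linv x N n y) * indicator {x 0 .. x N} y
      = \<psi> (Linv x N n y)"
  proof eventually_elim
    case (elim y)
    show ?case
    proof (cases "y \<in> Ipiece x n")
      case True
      then have "y \<in> {x 0 .. x N}" using Ipiece_subset[OF n] Ipiece_subset_I[OF n] by blast
      with True Linv_mem[OF n] show ?thesis by (simp add: \<psi>_def)
    next
      case False
      with elim have "y \<notin> {x (n - 1) .. x n}" by (cases "n = 1") (auto simp: Ipiece_def)
      with False Linv_mem_iff[OF n] show ?thesis by (simp add: \<psi>_def)
    qed
  qed
  then have "(\<integral>\<^sup>+ y. indicator (Ipiece x n) y * \<phi> (Linv x N n y) \<partial>Imeas x N)
      = (\<integral>\<^sup>+ y. \<psi> ((x 0 - x (n - 1) / scale n) + (1 / scale n) * y) \<partial>lebesgue)"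
    unfolding Imeas_def Linv_affine[OF n, symmetric]
    by (subst nn_integral_restrict_space) (auto intro: nn_integral_cong_AE)
  also have "\<dots> = scale n * (\<integral>\<^sup>+ t. \<psi> t \<partial>lebesgue)"
    using nn_integral_real_affine_lebesgue[OF \<psi>, of "1 / scale n" "x 0 - x (n - 1) / scale n"] a
    by (simp add: ennreal_mult'[symmetric] mult.assoc[symmetric])
  also have "(\<integral>\<^sup>+ t. \<psi> t \<partial>lebesgue) = (\<integral>\<^sup>+ t. \<phi> t \<partial>Imeas x N)"
    unfolding \<psi>_def Imeas_def by (subst nn_integral_restrict_space) auto
  finally show ?thesis .
qed

lemma AE_Linv:
  assumes "AE t in Imeas x N. P t"
  shows "AE y in Imeas x N. \<forall>n\<in>{1..N}. y \<in> Ipiece x n \<longrightarrow> P (Linv x N n y)"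
proof (subst AE_finite_all, simp, intro ballI)
  fix n assume n: "n \<in> {1..N}"
  from assms obtain Z where Z: "{t \<in> space (Imeas x N). \<not> P t} \<subseteq> Z"
    "emeasure (Imeas x N) Z = 0" "Z \<in> sets (Imeas x N)"
    by (rule AE_E)
  have Z_measurable: "indicator Z \<in> borel_measurable (Imeas x N)" using Z(3) by simp
  have "(\<integral>\<^sup>+ y. indicator (Ipiece x n) y * indicator Z (Linv x N n y) \<partial>Imeas x N) = 0"
    using Z(2,3) by (simp add: nn_integral_Ipiece_Linv[OF Z_measurable n])
  moreover note measurable_indicator_Ipiece_Linv[OF Z_measurable n]
  ultimately have "AE y in Imeas x N. indicator (Ipiece x n) y * (indicator Z (Linv x N n y) :: ennreal) = 0"
    by (subst (asm) nn_integral_0_iff_AE) auto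
  then show "AE y in Imeas x N. y \<in> Ipiece x n \<longrightarrow> P (Linv x N n y)"
  proof (rule eventually_mono, intro impI)
    fix y assume "indicator (Ipiece x n) y * (indicator Z (Linv x N n y) :: ennreal) = 0"
      and y: "y \<in> Ipiece x n"
    then have "Linv x N n y \<notin> Z" by (simp add: indicator_def)
    with Linv_mem[OF n y] Z(1) show "P (Linv x N n y)" by (auto simp: Imeas_def)
  qed
qed

end

locale fractal_operator = interval_partition +
  fixes \<alpha> :: "nat \<Rightarrow> real \<Rightarrow> real"
  assumes alpha_bounded: "\<forall>n\<in>{1..N}. Lp_mem (Imeas x N) top (\<alpha> n)"
begin

definition Tlin :: "(real \<Rightarrow> real) \<Rightarrow> real \<Rightarrow> real" where
  "Tlin u y = (\<Sum>n\<in>{1..N}. if y \<in> Ipiece x n then \<alpha> n (Linv x N n y) * u (Linv x N n y) else 0)"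

lemma Top_eq: "Top x N \<alpha> f b g y = f y + Tlin (\<lambda>t. g t - b t) y"
  by (simp add: Top_def Tlin_def)

lemma Tlin_Ipiece:
  assumes "n \<in> {1..N}" "y \<in> Ipiece x n"
  shows "Tlin u y = \<alpha> n (Linv x N n y) * u (Linv x N n y)"
proof -
  have "Tlin u y = (\<Sum>m\<in>{1..N}. if m = n then \<alpha> n (Linv x N n y) * u (Linv x N n y) else 0)"
    unfolding Tlin_def using assms Ipiece_disjoint by (intro sum.cong) auto
  with assms show ?thesis by simp
qed

lemma Tlin_outside: "\<forall>n\<in>{1..N}. y \<notin> Ipiece x n \<Longrightarrow> Tlin u y = 0"
  by (simp add: Tlin_def)

lemma Tlin_diff: "Tlin (\<lambda>t. u t - v t) y = Tlin u y - Tlin v y"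
  by (cases "\<exists>n\<in>{1..N}. y \<in> Ipiece x n") (auto simp: Tlin_Ipiece Tlin_outside algebra_simps)

lemma alpha_measurable: "n \<in> {1..N} \<Longrightarrow> \<alpha> n \<in> borel_measurable (Imeas x N)"
  using alpha_bounded by (auto simp: Lp_mem_def)

lemma Tlin_measurable:
  assumes "u \<in> borel_measurable (Imeas x N)"
  shows "Tlin u \<in> borel_measurable (Imeas x N)"
proof -
  have "(\<lambda>y. if y \<in> Ipiece x n then (\<lambda>t. \<alpha> n t * u t) (Linv x N n y) else 0) \<in> borel_measurable (Imeas x N)"
    if n: "n \<in> {1..N}" for n
    using alpha_measurable[OF n] assms by (intro measurable_Ipiece_Linv n) measurable
  then show ?thesis unfolding Tlin_def[abs_def] by (intro borel_measurable_sum) auto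
qed

lemma
  shows Lam_nonneg: "0 \<le> Lam x N \<alpha>"
    and AE_alpha_le_Lam: "AE t in Imeas x N. \<forall>n\<in>{1..N}. \<bar>\<alpha> n t\<bar> \<le> Lam x N \<alpha>"
proof -
  define Q where "Q t = Max ((\<lambda>n. \<bar>\<alpha> n t\<bar>) ` {1..N})" for t
  have Q_le: "Q t \<le> C \<longleftrightarrow> (\<forall>n\<in>{1..N}. \<bar>\<alpha> n t\<bar> \<le> C)" for t C
    using N_pos by (simp add: Q_def)
  have Q_nonneg: "0 \<le> Q t" for t
    using Q_le[of t "Q t"] N_pos by force
  have "\<forall>n\<in>{1..N}. \<exists>C. AE t in Imeas x N. \<bar>\<alpha> n t\<bar> \<le> C"
    using alpha_bounded by (simp add: Lp_mem_def)
  from bchoice[OF this] obtain C where "\<forall>n\<in>{1..N}. AE t in Imeas x N. \<bar>\<alpha> n t\<bar> \<le> C n"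
    by blast
  then have "AE t in Imeas x N. \<forall>n\<in>{1..N}. \<bar>\<alpha> n t\<bar> \<le> C n"
    by (subst AE_finite_all) auto
  then have "AE t in Imeas x N. Q t \<le> Max (C ` {1..N})"
    by (rule eventually_mono) (force simp: Q_le intro: order_trans[OF _ Max_ge])
  note bounds = Inf_ess_bounds[OF Q_nonneg emeasure_Imeas_nonzero this]
  have Lam_eq: "Lam x N \<alpha> = Inf {C. AE t in Imeas x N. Q t \<le> C}"
    by (simp add: Lam_def Q_le)
  show "0 \<le> Lam x N \<alpha>" using bounds(2) by (simp add: Lam_eq)
  show "AE t in Imeas x N. \<forall>n\<in>{1..N}. \<bar>\<alpha> n t\<bar> \<le> Lam x N \<alpha>"
    using bounds(3) unfolding Lam_eq[symmetric] by (simp add: Q_le)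
qed

lemma abs_Tlin_powr:
  assumes "0 < q"
  shows "ennreal (\<bar>Tlin u y\<bar> powr q) = (\<Sum>n\<in>{1..N}. indicator (Ipiece x n) y *
     ennreal (\<bar>\<alpha> n (Linv x N n y)\<bar> powr q * \<bar>u (Linv x N n y)\<bar> powr q))"
proof (cases "\<exists>n\<in>{1..N}. y \<in> Ipiece x n")
  case True
  then obtain n where n: "n \<in> {1..N}" "y \<in> Ipiece x n" by blast
  have "(\<Sum>m\<in>{1..N}. indicator (Ipiece x m) y *
      ennreal (\<bar>\<alpha> m (Linv x N m y)\<bar> powr q * \<bar>u (Linv x N m y)\<bar> powr q))
    = (\<Sum>m\<in>{1..N}. if m = n then ennreal (\<bar>\<alpha> n (Linv x N n y)\<bar> powr q * \<bar>u (Linv x N n y)\<bar> powr q) else 0)"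
    using n Ipiece_disjoint by (intro sum.cong) auto
  with n show ?thesis by (simp add: Tlin_Ipiece abs_mult powr_mult)
qed (use assms in \<open>simp add: Tlin_outside\<close>)

lemma nn_integral_Tlin_abs_powr_le:
  assumes u: "u \<in> borel_measurable (Imeas x N)" and q: "0 < q"
  shows "(\<integral>\<^sup>+ y. \<bar>Tlin u y\<bar> powr q \<partial>Imeas x N)
    \<le> Lam x N \<alpha> powr q * (\<integral>\<^sup>+ t. \<bar>u t\<bar> powr q \<partial>Imeas x N)"
proof -
  let ?M = "Imeas x N" and ?\<Lambda> = "Lam x N \<alpha>"
  let ?E = "\<integral>\<^sup>+ t. \<bar>u t\<bar> powr q \<partial>?M"
  have [measurable]: "u \<in> borel_measurable ?M" "\<And>n. n \<in> {1..N} \<Longrightarrow> \<alpha> n \<in> borel_measurable ?M"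
    using u alpha_measurable by auto
  have weighted: "(\<integral>\<^sup>+ t. ennreal (\<bar>\<alpha> n t\<bar> powr q * \<bar>u t\<bar> powr q) \<partial>?M) \<le> ?\<Lambda> powr q * ?E"
    if n: "n \<in> {1..N}" for n
  proof -
    have "(\<integral>\<^sup>+ t. ennreal (\<bar>\<alpha> n t\<bar> powr q * \<bar>u t\<bar> powr q) \<partial>?M)
        \<le> (\<integral>\<^sup>+ t. ennreal (?\<Lambda> powr q) * ennreal (\<bar>u t\<bar> powr q) \<partial>?M)"
      using AE_alpha_le_Lam
    proof (rule nn_integral_mono_AE[OF eventually_mono])
      fix t assume "\<forall>n\<in>{1..N}. \<bar>\<alpha> n t\<bar> \<le> ?\<Lambda>"
      with n q have "\<bar>\<alpha> n t\<bar> powr q * \<bar>u t\<bar> powr q \<le> ?\<Lambda> powr q * \<bar>u t\<bar> powr q"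
        by (intro mult_right_mono powr_mono2) auto
      then show "ennreal (\<bar>\<alpha> n t\<bar> powr q * \<bar>u t\<bar> powr q) \<le> ennreal (?\<Lambda> powr q) * ennreal (\<bar>u t\<bar> powr q)"
        by (simp add: ennreal_mult''[symmetric] ennreal_leI)
    qed
    also have "\<dots> = ?\<Lambda> powr q * ?E" by (rule nn_integral_cmult) measurable
    finally show ?thesis .
  qed
  have "(\<integral>\<^sup>+ y. \<bar>Tlin u y\<bar> powr q \<partial>?M) = (\<Sum>n\<in>{1..N}. \<integral>\<^sup>+ y. indicator (Ipiece x n) y *
      ennreal (\<bar>\<alpha> n (Linv x N n y)\<bar> powr q * \<bar>u (Linv x N n y)\<bar> powr q) \<partial>?M)"
    unfolding abs_Tlin_powr[OF q]
    by (intro nn_integral_sum measurable_indicator_Ipiece_Linv) measurable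
  also have "\<dots> = (\<Sum>n\<in>{1..N}. scale n * (\<integral>\<^sup>+ t. ennreal (\<bar>\<alpha> n t\<bar> powr q * \<bar>u t\<bar> powr q) \<partial>?M))"
    by (intro sum.cong refl nn_integral_Ipiece_Linv) measurable
  also have "\<dots> \<le> (\<Sum>n\<in>{1..N}. scale n * (?\<Lambda> powr q * ?E))"
    by (intro sum_mono mult_left_mono weighted) auto
  also have "\<dots> = (\<Sum>n\<in>{1..N}. ennreal (scale n)) * (?\<Lambda> powr q * ?E)"
    by (simp add: sum_distrib_right)
  also have "(\<Sum>n\<in>{1..N}. ennreal (scale n)) = 1"
    using scale_pos sum_scale by (subst sum_ennreal) (auto simp: less_imp_le)
  finally show ?thesis by simp
qed

lemma
  assumes q: "0 < q" and u: "Lp_mem (Imeas x N) (ennreal q) u"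
  shows Lp_mem_Tlin_ennreal: "Lp_mem (Imeas x N) (ennreal q) (Tlin u)"
    and integral_Tlin_abs_powr_le:
      "(\<integral>y. \<bar>Tlin u y\<bar> powr q \<partial>Imeas x N) \<le> Lam x N \<alpha> powr q * (\<integral>t. \<bar>u t\<bar> powr q \<partial>Imeas x N)"
proof -
  let ?M = "Imeas x N"
  have [measurable]: "u \<in> borel_measurable ?M" "Tlin u \<in> borel_measurable ?M"
    and u_int: "integrable ?M (\<lambda>t. \<bar>u t\<bar> powr q)"
    using u q Tlin_measurable by (auto simp: Lp_mem_ennreal_iff)
  have "(\<integral>\<^sup>+ y. \<bar>Tlin u y\<bar> powr q \<partial>?M) \<le> Lam x N \<alpha> powr q * (\<integral>\<^sup>+ t. \<bar>u t\<bar> powr q \<partial>?M)"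
    using nn_integral_Tlin_abs_powr_le[OF _ q] by simp
  also have "\<dots> = ennreal (Lam x N \<alpha> powr q * (\<integral>t. \<bar>u t\<bar> powr q \<partial>?M))"
    using u_int by (simp add: nn_integral_eq_integral ennreal_mult)
  finally have bound: "(\<integral>\<^sup>+ y. \<bar>Tlin u y\<bar> powr q \<partial>?M) \<le> \<dots>" .
  then have Tu_int: "integrable ?M (\<lambda>y. \<bar>Tlin u y\<bar> powr q)"
    by (intro integrableI_bounded) (auto simp: top.not_eq_extremum intro: le_less_trans)
  then show "Lp_mem ?M (ennreal q) (Tlin u)" using q by (simp add: Lp_mem_ennreal_iff)
  from bound show "(\<integral>y. \<bar>Tlin u y\<bar> powr q \<partial>?M) \<le> Lam x N \<alpha> powr q * (\<integral>t. \<bar>u t\<bar> powr q \<partial>?M)"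
    using Tu_int Lam_nonneg by (simp add: nn_integral_eq_integral ennreal_le_iff)
qed

lemma
  assumes u: "Lp_mem (Imeas x N) top u"
  shows Lp_mem_Tlin_top: "Lp_mem (Imeas x N) top (Tlin u)"
    and Lp_norm_top_Tlin_le: "Lp_norm (Imeas x N) top (Tlin u) \<le> Lam x N \<alpha> * Lp_norm (Imeas x N) top u"
proof -
  let ?M = "Imeas x N" and ?\<Lambda> = "Lam x N \<alpha>" and ?C = "Lp_norm (Imeas x N) top u"
  have "AE t in ?M. \<bar>u t\<bar> \<le> ?C \<and> (\<forall>n\<in>{1..N}. \<bar>\<alpha> n t\<bar> \<le> ?\<Lambda>)"
    using AE_le_Lp_norm_top[OF emeasure_Imeas_nonzero u] AE_alpha_le_Lam by eventually_elim auto
  from AE_Linv[OF this] have bound: "AE y in ?M. \<bar>Tlin u y\<bar> \<le> ?\<Lambda> * ?C"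
  proof (rule eventually_mono)
    fix y assume y: "\<forall>n\<in>{1..N}. y \<in> Ipiece x n \<longrightarrow>
      \<bar>u (Linv x N n y)\<bar> \<le> ?C \<and> (\<forall>m\<in>{1..N}. \<bar>\<alpha> m (Linv x N n y)\<bar> \<le> ?\<Lambda>)"
    show "\<bar>Tlin u y\<bar> \<le> ?\<Lambda> * ?C"
    proof (cases "\<exists>n\<in>{1..N}. y \<in> Ipiece x n")
      case True
      then obtain n where n: "n \<in> {1..N}" "y \<in> Ipiece x n" by blast
      with y Lam_nonneg show ?thesis by (auto simp: Tlin_Ipiece abs_mult intro!: mult_mono)
    qed (use Lam_nonneg Lp_norm_top_nonneg[OF emeasure_Imeas_nonzero u] in \<open>simp add: Tlin_outside\<close>)
  qed
  then show "Lp_mem ?M top (Tlin u)"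
    using u Tlin_measurable by (auto simp: Lp_mem_def)
  from bound show "Lp_norm ?M top (Tlin u) \<le> ?\<Lambda> * ?C"
    by (rule Lp_norm_top_le[OF emeasure_Imeas_nonzero])
qed

lemma Lp_mem_Tlin: "0 < p \<Longrightarrow> Lp_mem (Imeas x N) p u \<Longrightarrow> Lp_mem (Imeas x N) p (Tlin u)"
  by (cases p rule: positive_ennreal_cases) (auto intro: Lp_mem_Tlin_top Lp_mem_Tlin_ennreal)

lemma Lp_norm_Tlin_le:
  assumes "0 < p" and u: "Lp_mem (Imeas x N) p u"
  shows "Lp_norm (Imeas x N) p (Tlin u) \<le> Lam x N \<alpha> * Lp_norm (Imeas x N) p u"
  using \<open>0 < p\<close>
proof (cases rule: positive_ennreal_cases)
  case (2 q)
  let ?E = "\<lambda>u. \<integral>t. \<bar>u t\<bar> powr q \<partial>Imeas x N"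
  have "?E (Tlin u) powr (1 / q) \<le> (Lam x N \<alpha> powr q * ?E u) powr (1 / q)"
    using integral_Tlin_abs_powr_le[of q u] u 2 by (intro powr_mono2) auto
  also have "\<dots> = Lam x N \<alpha> * ?E u powr (1 / q)"
    using 2 Lam_nonneg by (simp add: powr_mult powr_powr)
  finally show ?thesis using 2 by (simp add: Lp_norm_ennreal)
qed (use u Lp_norm_top_Tlin_le in simp)

lemma Lp_mem_Tlin_power: "0 < p \<Longrightarrow> Lp_mem (Imeas x N) p h \<Longrightarrow> Lp_mem (Imeas x N) p ((Tlin ^^ k) h)"
  by (induction k) (simp_all add: Lp_mem_Tlin)

lemma integral_Tlin_power_le:
  assumes "0 < q" "Lp_mem (Imeas x N) (ennreal q) h"
  shows "(\<integral>y. \<bar>(Tlin ^^ k) h y\<bar> powr q \<partial>Imeas x N)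
    \<le> (Lam x N \<alpha> powr q) ^ k * (\<integral>t. \<bar>h t\<bar> powr q \<partial>Imeas x N)"
proof (induction k)
  case (Suc k)
  have "Lp_mem (Imeas x N) (ennreal q) ((Tlin ^^ k) h)" using assms by (intro Lp_mem_Tlin_power) auto
  then have "(\<integral>y. \<bar>(Tlin ^^ Suc k) h y\<bar> powr q \<partial>Imeas x N)
      \<le> Lam x N \<alpha> powr q * (\<integral>y. \<bar>(Tlin ^^ k) h y\<bar> powr q \<partial>Imeas x N)"
    using assms by (simp add: integral_Tlin_abs_powr_le)
  also have "\<dots> \<le> (Lam x N \<alpha> powr q) ^ Suc k * (\<integral>t. \<bar>h t\<bar> powr q \<partial>Imeas x N)"
    using Suc Lam_nonneg by (auto simp: mult.assoc intro!: mult_left_mono)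
  finally show ?case .
qed simp

lemma Lp_norm_Tlin_power_le:
  assumes "0 < p" "Lp_mem (Imeas x N) p h"
  shows "Lp_norm (Imeas x N) p ((Tlin ^^ k) h) \<le> Lam x N \<alpha> ^ k * Lp_norm (Imeas x N) p h"
proof (induction k)
  case (Suc k)
  have "Lp_norm (Imeas x N) p ((Tlin ^^ Suc k) h) \<le> Lam x N \<alpha> * Lp_norm (Imeas x N) p ((Tlin ^^ k) h)"
    using assms by (simp add: Lp_norm_Tlin_le Lp_mem_Tlin_power)
  also have "\<dots> \<le> Lam x N \<alpha> ^ Suc k * Lp_norm (Imeas x N) p h"
    using Suc Lam_nonneg by (auto simp: mult.assoc intro!: mult_left_mono)
  finally show ?case .
qed simp

lemma Tlin_suminf:
  assumes "\<forall>n\<in>{1..N}. y \<in> Ipiece x n \<longrightarrow> summable (\<lambda>k. D k (Linv x N n y))"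
  shows "(\<Sum>k. Tlin (D k) y) = Tlin (\<lambda>t. \<Sum>k. D k t) y"
proof (cases "\<exists>n\<in>{1..N}. y \<in> Ipiece x n")
  case True
  then obtain n where "n \<in> {1..N}" "y \<in> Ipiece x n" by blast
  with assms show ?thesis by (simp add: Tlin_Ipiece suminf_mult)
qed (simp add: Tlin_outside)

lemma Tlin_fixed_point_of_summable:
  assumes "AE y in Imeas x N. summable (\<lambda>k. (Tlin ^^ k) h y)"
  shows "AE y in Imeas x N. (\<Sum>k. (Tlin ^^ k) h y) = h y + Tlin (\<lambda>t. \<Sum>k. (Tlin ^^ k) h t) y"
  using assms AE_Linv[OF assms]
proof eventually_elim
  case (elim y)
  then have "(\<Sum>k. Tlin ((Tlin ^^ k) h) y) = (\<Sum>k. (Tlin ^^ k) h y) - h y"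
    using suminf_split_head[of "\<lambda>k. (Tlin ^^ k) h y"] by simp
  with elim show ?case by (simp add: Tlin_suminf)
qed

lemma Tlin_fixed_point_exists:
  assumes \<Lambda>: "Lam x N \<alpha> < 1" and "0 < p" and h: "Lp_mem (Imeas x N) p h"
  shows "\<exists>g. Lp_mem (Imeas x N) p g \<and> (AE y in Imeas x N. g y = h y + Tlin g y)"
proof -
  let ?M = "Imeas x N" and ?D = "\<lambda>k. (Tlin ^^ k) h"
  have [measurable]: "?D k \<in> borel_measurable ?M" for k
    using Lp_mem_Tlin_power[OF \<open>0 < p\<close> h] by (simp add: Lp_mem_def)
  have "Lp_mem ?M p (\<lambda>y. \<Sum>k. ?D k y) \<and> (AE y in ?M. summable (\<lambda>k. ?D k y))"
    using \<open>0 < p\<close>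
  proof (cases rule: positive_ennreal_cases)
    case 1
    let ?C = "Lp_norm ?M top h"
    have D_top: "Lp_mem ?M top (?D k)" for k using Lp_mem_Tlin_power[OF \<open>0 < p\<close> h] 1 by simp
    have "AE y in ?M. \<bar>?D k y\<bar> \<le> ?C * Lam x N \<alpha> ^ k" for k
      using AE_le_Lp_norm_top[OF emeasure_Imeas_nonzero D_top[of k]] Lp_norm_Tlin_power_le[OF \<open>0 < p\<close> h, of k] 1
      by (auto simp: mult.commute elim!: eventually_mono)
    from AE_summable_of_AE_geometric_bound[OF Lam_nonneg \<Lambda> this]
    have "AE y in ?M. summable (\<lambda>k. ?D k y) \<and> \<bar>\<Sum>k. ?D k y\<bar> \<le> ?C / (1 - Lam x N \<alpha>)" .
    with 1 show ?thesis by (auto simp: Lp_mem_def elim: eventually_mono)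
  next
    case (2 q)
    have hq: "Lp_mem ?M (ennreal q) h" using h 2 by simp
    have r: "0 \<le> Lam x N \<alpha> powr q" "Lam x N \<alpha> powr q < 1"
      using powr_less_mono2[of q "Lam x N \<alpha>" 1] \<Lambda> Lam_nonneg 2 by auto
    have "\<And>k. integrable ?M (\<lambda>y. \<bar>?D k y\<bar> powr q)"
      using Lp_mem_Tlin_power[OF _ hq] 2 by (simp add: Lp_mem_ennreal_iff)
    from AE_summable_of_geometric_decay[OF \<open>0 < q\<close> r _ this integral_Tlin_power_le[OF \<open>0 < q\<close> hq]]
    have "AE y in ?M. summable (\<lambda>k. ?D k y)" and "integrable ?M (\<lambda>y. \<bar>\<Sum>k. ?D k y\<bar> powr q)"
      by simp_all
    with 2 show ?thesis by (simp add: Lp_mem_ennreal_iff)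
  qed
  then show ?thesis using Tlin_fixed_point_of_summable by blast
qed

lemma fconv_fixed_point:
  assumes "Lam x N \<alpha> < 1" "0 < p" and f: "Lp_mem (Imeas x N) p f" and b: "Lp_mem (Imeas x N) p b"
  shows "Lp_mem (Imeas x N) p (fconv x N \<alpha> p f b)"
    and "AE y in Imeas x N. fconv x N \<alpha> p f b y = f y + Tlin (\<lambda>t. fconv x N \<alpha> p f b t - b t) y"
proof -
  have "Lp_mem (Imeas x N) p (\<lambda>t. f t - Tlin b t)"
    using assms by (intro Lp_mem_diff Lp_mem_Tlin)
  then obtain g where "Lp_mem (Imeas x N) p g" "AE y in Imeas x N. g y = (f y - Tlin b y) + Tlin g y"
    using Tlin_fixed_point_exists assms by blast
  then have "\<exists>g. Lp_mem (Imeas x N) p g \<and> (AE y in Imeas x N. Top x N \<alpha> f b g y = g y)"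
    by (auto simp: Top_eq Tlin_diff elim!: eventually_mono)
  then have "Lp_mem (Imeas x N) p (fconv x N \<alpha> p f b)
      \<and> (AE y in Imeas x N. Top x N \<alpha> f b (fconv x N \<alpha> p f b) y = fconv x N \<alpha> p f b y)"
    unfolding fconv_def by (rule someI_ex)
  then show "Lp_mem (Imeas x N) p (fconv x N \<alpha> p f b)"
    and "AE y in Imeas x N. fconv x N \<alpha> p f b y = f y + Tlin (\<lambda>t. fconv x N \<alpha> p f b t - b t) y"
    by (auto simp: Top_eq elim!: eventually_mono)
qed

lemma subadditive_contraction_Lp_norm:
  assumes "Lam x N \<alpha> < 1" "1 \<le> p"
  shows "subadditive_contraction (Imeas x N) {u. Lp_mem (Imeas x N) p u} (Lp_norm (Imeas x N) p)
    Tlin (Lam x N \<alpha>)"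
proof -
  have "0 < p" by (rule less_le_trans[OF zero_less_one assms(2)])
  with assms show ?thesis
    by unfold_locales (auto simp: Lp_mem_add Lp_mem_uminus Lp_mem_Tlin Tlin_diff Lp_norm_uminus
      Lp_norm_add_le[OF emeasure_Imeas_nonzero] Lp_norm_Tlin_le intro: Lp_norm_cong_AE)
qed

lemma subadditive_contraction_integral_abs_powr:
  assumes "Lam x N \<alpha> < 1" "0 < q" "q \<le> 1"
  shows "subadditive_contraction (Imeas x N) {u. Lp_mem (Imeas x N) (ennreal q) u}
    (\<lambda>u. \<integral>t. \<bar>u t\<bar> powr q \<partial>Imeas x N) Tlin (Lam x N \<alpha> powr q)"
proof unfold_locales
  show "Lam x N \<alpha> powr q < 1"
    using powr_less_mono2[of q "Lam x N \<alpha>" 1] assms Lam_nonneg by auto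
  show "(\<integral>t. \<bar>u t\<bar> powr q \<partial>Imeas x N) = (\<integral>t. \<bar>v t\<bar> powr q \<partial>Imeas x N)"
    if "u \<in> {u. Lp_mem (Imeas x N) (ennreal q) u}" "v \<in> {u. Lp_mem (Imeas x N) (ennreal q) u}"
      "AE t in Imeas x N. u t = v t" for u v
    using that assms by (intro integral_cong_AE) (auto simp: Lp_mem_ennreal_iff elim!: eventually_mono)
qed (use assms in \<open>auto simp: Lp_mem_add Lp_mem_uminus Lp_mem_Tlin Tlin_diff
  integral_abs_powr_add_le integral_Tlin_abs_powr_le\<close>)

lemma fconv_Lp_norm_le:
  assumes "Lam x N \<alpha> < 1" "1 \<le> p"
  shows "Lp_mem (Imeas x N) p f \<Longrightarrow> Lp_mem (Imeas x N) p f' \<Longrightarrow> Lp_mem (Imeas x N) p b \<Longrightarrow>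
      Lp_norm (Imeas x N) p (\<lambda>t. fconv x N \<alpha> p f b t - fconv x N \<alpha> p f' b t)
        \<le> 1 / (1 - Lam x N \<alpha>) * Lp_norm (Imeas x N) p (\<lambda>t. f t - f' t)"
    and "Lp_mem (Imeas x N) p f \<Longrightarrow> Lp_mem (Imeas x N) p b \<Longrightarrow> Lp_mem (Imeas x N) p b' \<Longrightarrow>
      Lp_norm (Imeas x N) p (\<lambda>t. fconv x N \<alpha> p f b t - fconv x N \<alpha> p f b' t)
        \<le> Lam x N \<alpha> / (1 - Lam x N \<alpha>) * Lp_norm (Imeas x N) p (\<lambda>t. b t - b' t)"
  using fconv_fixed_point[OF assms(1) less_le_trans[OF zero_less_one assms(2)]]
  by (auto intro!: subadditive_contraction.seed_Lipschitz[OF subadditive_contraction_Lp_norm[OF assms], where b = b]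
      subadditive_contraction.base_Lipschitz[OF subadditive_contraction_Lp_norm[OF assms], where f = f])

lemma fconv_d_p_le:
  assumes "Lam x N \<alpha> < 1" "0 < q" "q \<le> 1"
  shows "Lp_mem (Imeas x N) (ennreal q) f \<Longrightarrow> Lp_mem (Imeas x N) (ennreal q) f' \<Longrightarrow>
      Lp_mem (Imeas x N) (ennreal q) b \<Longrightarrow>
      d_p (Imeas x N) q (fconv x N \<alpha> (ennreal q) f b) (fconv x N \<alpha> (ennreal q) f' b)
        \<le> 1 / (1 - Lam x N \<alpha> powr q) * d_p (Imeas x N) q f f'"
    and "Lp_mem (Imeas x N) (ennreal q) f \<Longrightarrow> Lp_mem (Imeas x N) (ennreal q) b \<Longrightarrow>
      Lp_mem (Imeas x N) (ennreal q) b' \<Longrightarrow>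
      d_p (Imeas x N) q (fconv x N \<alpha> (ennreal q) f b) (fconv x N \<alpha> (ennreal q) f b')
        \<le> Lam x N \<alpha> powr q / (1 - Lam x N \<alpha> powr q) * d_p (Imeas x N) q b b'"
  using fconv_fixed_point[OF assms(1), of "ennreal q"] assms(2) unfolding d_p_def
  by (auto intro!: subadditive_contraction.seed_Lipschitz[OF subadditive_contraction_integral_abs_powr[OF assms], where b = b]
      subadditive_contraction.base_Lipschitz[OF subadditive_contraction_integral_abs_powr[OF assms], where f = f])

end

theorem theorem3p4:
  fixes x :: "nat \<Rightarrow> real" and N :: nat and \<alpha> :: "nat \<Rightarrow> real \<Rightarrow> real"
  assumes "N \<ge> 2"
    and "\<forall>i<N. x i < x (Suc i)"
    and "\<forall>n\<in>{1..N}. Lp_mem (Imeas x N) (top::ennreal) (\<alpha> n)"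
    and "Lam x N \<alpha> < 1"
  shows
   "(\<forall>p::ennreal. 1 \<le> p \<longrightarrow>
      (\<forall>f f' b. Lp_mem (Imeas x N) p f \<and> Lp_mem (Imeas x N) p f' \<and> Lp_mem (Imeas x N) p b \<longrightarrow>
         Lp_norm (Imeas x N) p (\<lambda>t. fconv x N \<alpha> p f b t - fconv x N \<alpha> p f' b t)
           \<le> 1 / (1 - Lam x N \<alpha>) * Lp_norm (Imeas x N) p (\<lambda>t. f t - f' t)) \<and>
      (\<forall>f b b'. Lp_mem (Imeas x N) p f \<and> Lp_mem (Imeas x N) p b \<and> Lp_mem (Imeas x N) p b' \<longrightarrow>
         Lp_norm (Imeas x N) p (\<lambda>t. fconv x N \<alpha> p f b t - fconv x N \<alpha> p f b' t)
           \<le> Lam x N \<alpha> / (1 - Lam x N \<alpha>) * Lp_norm (Imeas x N) p (\<lambda>t. b t - b' t))) \<and>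
    (\<forall>p::real. 0 < p \<and> p < 1 \<longrightarrow>
      (\<forall>f f' b. Lp_mem (Imeas x N) (ennreal p) f \<and> Lp_mem (Imeas x N) (ennreal p) f'
           \<and> Lp_mem (Imeas x N) (ennreal p) b \<longrightarrow>
         d_p (Imeas x N) p (fconv x N \<alpha> (ennreal p) f b) (fconv x N \<alpha> (ennreal p) f' b)
           \<le> 1 / (1 - Lam x N \<alpha> powr p) * d_p (Imeas x N) p f f') \<and>
      (\<forall>f b b'. Lp_mem (Imeas x N) (ennreal p) f \<and> Lp_mem (Imeas x N) (ennreal p) b
           \<and> Lp_mem (Imeas x N) (ennreal p) b' \<longrightarrow>
         d_p (Imeas x N) p (fconv x N \<alpha> (ennreal p) f b) (fconv x N \<alpha> (ennreal p) f b')
           \<le> Lam x N \<alpha> powr p / (1 - Lam x N \<alpha> powr p) * d_p (Imeas x N) p b b'))"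
proof -
  interpret fractal_operator x N \<alpha>
    using assms by unfold_locales auto
  show ?thesis
    using fconv_Lp_norm_le[OF assms(4)] fconv_d_p_le[OF assms(4)] by (simp add: less_imp_le)
qed

end
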